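(* Let $(\mathbf{L},\mathbf{R})\in\mathcal{P}_{\mathsf N}$ be superbalanced and suppose it admits a contraction map. Then for every $i\in[\mathsf N+1]$, the null reduction of $(\mathbf{L},\mathbf{R})$ on $i$ admits a contraction map (when the null reduction is nonempty, i.e. row $i$ of $\mathbf{L}$ is nonzero; if it is empty the statement is trivial).
   Context: $\mathcal{P}_{\mathsf N}$ denotes the set of pairs $(\mathbf{L},\mathbf{R})$ of $(0,1)$-matrices, $\mathbf{L}$ of size $(\mathsf N+1)\times m_L$ and $\mathbf{R}$ of size $(\mathsf N+1)\times m_R$, such that there is an index $p\in[\mathsf N+1]$ (the purifier) for which row $p$ of $\mathbf{L}$ and row $p$ of $\mathbf{R}$ are both zero. $\mathbf{A}_{(i)}$ denotes the $i$-th row of a matrix $\mathbf{A}$; $|v|=\sum_k|v_k|$; $\cdot$ is the dot product; for bit strings $x,x'$ of equal length, $|x-x'|$ is their Hamming distance. A contraction map for $(\mathbf{L},\mathbf{R})$ is a map $f:\{0,1\}^{m_L}\to\{0,1\}^{m_R}$ such that (1) $f(\mathbf{L}_{(i)})=\mathbf{R}_{(i)}$ for all $i\in[\mathsf N+1]$, and (2) $|x-x'|\ge|f(x)-f(x')|$ for all $x,x'\in\{0,1\}^{m_L}$. (The existence of a contraction map is taken as the criterion for the associated entropy inequality to be a holographic entropy inequality.) The pair is superbalanced if $\mathbf{L}_{(i)}\cdot\mathbf{L}_{(j)}=\mathbf{R}_{(i)}\cdot\mathbf{R}_{(j)}$ for all $i,j\in[\mathsf N+1]$. The null reduction of $(\mathbf{L},\mathbf{R})$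 on $i$ is the pair $(\mathbf{L}',\mathbf{R}')$ where $\mathbf{L}'$ consists of the columns of $\mathbf{L}$ having a $1$ in row $i$ and $\mathbf{R}'$ consists of the columns of $\mathbf{R}$ having a $1$ in row $i$. *)

theory Defs
  imports Main
begin

text \<open>Bit strings are boolean lists; a (0,1)-matrix is a list of its rows.
  Entry True stands for 1, False for 0.\<close>

definition is_01_matrix :: "nat \<Rightarrow> nat \<Rightarrow> bool list list \<Rightarrow> bool" where
  "is_01_matrix rows cols A \<longleftrightarrow> length A = rows \<and> (\<forall>r\<in>set A. length r = cols)"

definition weight :: "bool list \<Rightarrow> nat" where
  "weight x = card {k. k < length x \<and> x ! k}"

definition dot01 :: "bool list \<Rightarrow> bool list \<Rightarrow> nat" where
  "dot01 x y = card {k. k < length x \<and> k < length y \<and> x ! k \<and> y ! k}"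

definition hamming :: "bool list \<Rightarrow> bool list \<Rightarrow> nat" where
  "hamming x y = card {k. k < length x \<and> k < length y \<and> x ! k \<noteq> y ! k}"

definition in_P :: "nat \<Rightarrow> nat \<Rightarrow> nat \<Rightarrow> bool list list \<Rightarrow> bool list list \<Rightarrow> bool" where
  "in_P N mL mR L R \<longleftrightarrow>
     is_01_matrix (N + 1) mL L \<and> is_01_matrix (N + 1) mR R \<and>
     (\<exists>p < N + 1. (\<forall>k < mL. \<not> L ! p ! k) \<and> (\<forall>k < mR. \<not> R ! p ! k))"

definition superbalanced :: "nat \<Rightarrow> bool list list \<Rightarrow> bool list list \<Rightarrow> bool" where
  "superbalanced N L R \<longleftrightarrow>
     (\<forall>i < N + 1. \<forall>j < N + 1. dot01 (L ! i) (L ! j) = dot01 (R ! i) (R ! j))"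

definition contraction_map ::
  "nat \<Rightarrow> nat \<Rightarrow> bool list list \<Rightarrow> bool list list \<Rightarrow> (bool list \<Rightarrow> bool list) \<Rightarrow> bool" where
  "contraction_map mL mR L R f \<longleftrightarrow>
     (\<forall>x. length x = mL \<longrightarrow> length (f x) = mR) \<and>
     (\<forall>i < length L. f (L ! i) = R ! i) \<and>
     (\<forall>x x'. length x = mL \<longrightarrow> length x' = mL \<longrightarrow> hamming (f x) (f x') \<le> hamming x x')"

definition has_contraction_map ::
  "nat \<Rightarrow> nat \<Rightarrow> bool list list \<Rightarrow> bool list list \<Rightarrow> bool" where
  "has_contraction_map mL mR L R \<longleftrightarrow> (\<exists>f. contraction_map mL mR L R f)"

definition null_reduce :: "bool list list \<Rightarrow> nat \<Rightarrow> bool list list" where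
  "null_reduce A i = map (\<lambda>row. nths row {k. A ! i ! k}) A"

end

theory Submission
  imports Defs
begin

text \<open>Write 0 for the zero vector and x \<le> a for the pointwise order. A contraction f with
  f 0 = 0 (forced by the purifier row) and |f a| = |a| preserves Hamming betweenness of 0, x, a:
  since x \<le> a means d(0,x) + d(x,a) = d(0,a), it follows that f x \<le> f a and |f x| = |x|.
  Superbalance gives |L_j| = |R_j| and |L_j \<and> L_i| = |R_j \<and> R_i|, so f maps L_j \<and> L_i below both R_j and R_i
  with the weight of R_j \<and> R_i, i.e. onto R_j \<and> R_i. The reduced map scatters a bit string over the
  support of L_i, applies f and restricts to the support of R_i; neither the scattering nor the
  restriction increases Hamming distances.\<close>

lemma weight_conv_filter: "weight x = length (filter id x)"
  unfolding weight_def length_filter_conv_card by simp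

lemma hamming_conv_filter: "hamming x y = length (filter (\<lambda>(a, b). a \<noteq> b) (zip x y))"
  unfolding hamming_def length_filter_conv_card
  by (intro arg_cong[where f = card] Collect_cong) (auto simp: nth_zip)

lemma dot01_conv_filter: "dot01 x y = length (filter (\<lambda>(a, b). a \<and> b) (zip x y))"
  unfolding dot01_def length_filter_conv_card
  by (intro arg_cong[where f = card] Collect_cong) (auto simp: nth_zip)

lemma weight_Nil [simp]: "weight [] = 0"
  and weight_Cons [simp]: "weight (a # x) = of_bool a + weight x"
  by (simp_all add: weight_conv_filter)

lemma hamming_Nil [simp]: "hamming [] y = 0" "hamming x [] = 0"
  and hamming_Cons [simp]: "hamming (a # x) (b # y) = of_bool (a \<noteq> b) + hamming x y"
  by (simp_all add: hamming_conv_filter)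

lemma hamming_self [simp]: "hamming x x = 0"
  by (simp add: hamming_def)

lemma weight_map2_conj: "weight (map2 (\<and>) x y) = dot01 x y"
  by (simp add: weight_conv_filter dot01_conv_filter filter_map comp_def case_prod_unfold)

lemma weight_eq_dot01_self: "weight x = dot01 x x"
  by (induction x) (simp_all add: dot01_conv_filter)

lemma hamming_eq_0_iff: "length x = length y \<Longrightarrow> hamming x y = 0 \<longleftrightarrow> x = y"
  by (induction x y rule: list_induct2) auto

lemma hamming_replicate_False: "hamming x (replicate (length x) False) = weight x"
  by (induction x) auto

lemma weight_le_weight_plus_hamming: "length x = length y \<Longrightarrow> weight y \<le> weight x + hamming x y"
  by (induction x y rule: list_induct2) auto

lemma weight_plus_hamming_if_le: "list_all2 (\<le>) x y \<Longrightarrow> weight x + hamming x y = weight y"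
  by (induction x y rule: list_all2_induct) auto

lemma le_if_weight_plus_hamming_le:
  "length x = length y \<Longrightarrow> weight x + hamming x y \<le> weight y \<Longrightarrow> list_all2 (\<le>) x y"
proof (induction x y rule: list_induct2)
  case Nil
  then show ?case by simp
next
  case (Cons a x b y)
  have "weight y \<le> weight x + hamming x y"
    using Cons.hyps by (rule weight_le_weight_plus_hamming)
  with Cons.prems Cons.IH show ?case by (cases a; cases b) auto
qed

lemma hamming_nths_le: "hamming (nths x S) (nths y S) \<le> hamming x y"
proof (induction x arbitrary: y S)
  case Nil
  then show ?case by simp
next
  case (Cons a x)
  show ?case
  proof (cases y)
    case Nil
    then show ?thesis by simp
  next
    case (Cons b y')
    then show ?thesis
      using Cons.IH[where y = y' and S = "{j. Suc j \<in> S}"] by (auto simp: nths_Cons)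
  qed
qed

lemma length_nths_ones: "length x = length a \<Longrightarrow> length (nths x {k. a ! k}) = weight a"
  by (simp add: length_nths weight_def)

lemma nths_map2_conj: "length x = length a \<Longrightarrow> nths (map2 (\<and>) x a) {k. a ! k} = nths x {k. a ! k}"
  by (induction x a rule: list_induct2) (auto simp: nths_Cons)

fun scatter :: "bool list \<Rightarrow> bool list \<Rightarrow> bool list" where
  "scatter [] ys = []"
| "scatter (False # as) ys = False # scatter as ys"
| "scatter (True # as) [] = False # scatter as []"
| "scatter (True # as) (y # ys) = y # scatter as ys"

lemma length_scatter [simp]: "length (scatter a y) = length a"
  by (induction a y rule: scatter.induct) auto

lemma hamming_scatter_le:
  "length y = length y' \<Longrightarrow> hamming (scatter a y) (scatter a y') \<le> hamming y y'"
proof (induction a arbitrary: y y')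
  case Nil
  then show ?case by simp
next
  case (Cons b a)
  show ?case
  proof (cases b)
    case False
    then show ?thesis using Cons by simp
  next
    case True
    then show ?thesis using Cons by (cases y; cases y') auto
  qed
qed

lemma scatter_nths: "length x = length a \<Longrightarrow> scatter a (nths x {k. a ! k}) = map2 (\<and>) x a"
proof (induction x a rule: list_induct2)
  case Nil
  then show ?case by simp
next
  case (Cons c x b a)
  then show ?case by (cases b) (auto simp: nths_Cons)
qed

lemma eq_if_list_all2_le_weight_eq:
  assumes "list_all2 (\<le>) x y" and "weight x = weight y"
  shows "x = y"
proof -
  have "hamming x y = 0"
    using weight_plus_hamming_if_le[OF assms(1)] assms(2) by simp
  with list_all2_lengthD[OF assms(1)] show ?thesis
    by (simp add: hamming_eq_0_iff)
qed

lemma list_all2_le_map2_conj_iff: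
  "length x = length y \<Longrightarrow>
    list_all2 (\<le>) z (map2 (\<and>) x y) \<longleftrightarrow> list_all2 (\<le>) z x \<and> list_all2 (\<le>) z y"
  by (auto simp: list_all2_conv_all_nth)

definition nonexpansive :: "nat \<Rightarrow> nat \<Rightarrow> (bool list \<Rightarrow> bool list) \<Rightarrow> bool" where
  "nonexpansive m n f \<longleftrightarrow>
     (\<forall>x. length x = m \<longrightarrow> length (f x) = n) \<and>
     (\<forall>x x'. length x = m \<longrightarrow> length x' = m \<longrightarrow> hamming (f x) (f x') \<le> hamming x x')"

lemma contraction_map_iff:
  "contraction_map m n L R f \<longleftrightarrow> nonexpansive m n f \<and> (\<forall>i < length L. f (L ! i) = R ! i)"
  unfolding contraction_map_def nonexpansive_def by blast

lemma nonexpansive_scatter_nths: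
  assumes "nonexpansive (length a) (length b) f"
  shows "nonexpansive (weight a) (weight b) (\<lambda>y. nths (f (scatter a y)) {k. b ! k})"
  unfolding nonexpansive_def
proof (intro conjI allI impI)
  fix y :: "bool list"
  show "length (nths (f (scatter a y)) {k. b ! k}) = weight b"
    using assms by (simp add: nonexpansive_def length_nths_ones)
next
  fix y y' :: "bool list"
  assume "length y = weight a" "length y' = weight a"
  have "hamming (nths (f (scatter a y)) {k. b ! k}) (nths (f (scatter a y')) {k. b ! k})
      \<le> hamming (f (scatter a y)) (f (scatter a y'))"
    by (rule hamming_nths_le)
  also have "\<dots> \<le> hamming (scatter a y) (scatter a y')"
    using assms by (simp add: nonexpansive_def)
  also have "\<dots> \<le> hamming y y'"
    by (rule hamming_scatter_le) (simp add: \<open>length y = weight a\<close> \<open>length y' = weight a\<close>)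
  finally show "hamming (nths (f (scatter a y)) {k. b ! k}) (nths (f (scatter a y')) {k. b ! k})
      \<le> hamming y y'" .
qed

lemma nonexpansive_le_image:
  assumes f: "nonexpansive m n f" and f0: "f (replicate m False) = replicate n False"
    and a: "length a = m" "weight (f a) = weight a" and x: "list_all2 (\<le>) x a"
  shows "list_all2 (\<le>) (f x) (f a)" and "weight (f x) = weight x"
proof -
  have lx: "length x = m"
    using x a(1) by (simp add: list_all2_lengthD)
  have lfx: "length (f x) = n" and lfa: "length (f a) = n"
    using f lx a(1) by (simp_all add: nonexpansive_def)
  have "weight (f x) = hamming (f x) (f (replicate m False))"
    using hamming_replicate_False[of "f x"] by (simp add: f0 lfx)
  also have "\<dots> \<le> hamming x (replicate m False)"
    using f lx by (simp add: nonexpansive_def)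
  also have "\<dots> = weight x"
    using hamming_replicate_False[of x] by (simp add: lx)
  finally have shrink: "weight (f x) \<le> weight x" .
  have contract: "hamming (f x) (f a) \<le> hamming x a"
    using f lx a(1) by (simp add: nonexpansive_def)
  have gap: "weight x + hamming x a = weight (f a)"
    using weight_plus_hamming_if_le[OF x] a(2) by simp
  have triangle: "weight (f a) \<le> weight (f x) + hamming (f x) (f a)"
    using lfx lfa by (simp add: weight_le_weight_plus_hamming)
  from shrink contract gap have "weight (f x) + hamming (f x) (f a) \<le> weight (f a)"
    by linarith
  with lfx lfa show "list_all2 (\<le>) (f x) (f a)"
    by (intro le_if_weight_plus_hamming_le) simp_all
  from shrink contract gap triangle show "weight (f x) = weight x"
    by linarith
qed

lemma nonexpansive_map2_conj:
  assumes f: "nonexpansive m n f" and f0: "f (replicate m False) = replicate n False"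
    and len: "length c = m" "length a = m"
    and weight: "weight (f c) = weight c" "weight (f a) = weight a"
    and meet: "dot01 (f c) (f a) = dot01 c a"
  shows "f (map2 (\<and>) c a) = map2 (\<and>) (f c) (f a)"
proof -
  let ?y = "map2 (\<and>) c a"
  have "list_all2 (\<le>) ?y ?y"
    by (simp add: list_all2_refl)
  then have "list_all2 (\<le>) ?y c" "list_all2 (\<le>) ?y a"
    using list_all2_le_map2_conj_iff[of c a ?y] len by simp_all
  then have "list_all2 (\<le>) (f ?y) (f c)" "list_all2 (\<le>) (f ?y) (f a)"
    and weight_fy: "weight (f ?y) = weight ?y"
    using nonexpansive_le_image[OF f f0 len(1) weight(1)] nonexpansive_le_image[OF f f0 len(2) weight(2)]
    by blast+
  moreover have "length (f c) = length (f a)"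
    using f len by (simp add: nonexpansive_def)
  ultimately have "list_all2 (\<le>) (f ?y) (map2 (\<and>) (f c) (f a))"
    using list_all2_le_map2_conj_iff by blast
  moreover have "weight (f ?y) = weight (map2 (\<and>) (f c) (f a))"
    using weight_fy meet by (simp add: weight_map2_conj)
  ultimately show ?thesis
    by (rule eq_if_list_all2_le_weight_eq)
qed

lemma contraction_map_null_reduce:
  assumes f: "contraction_map m n L R f" and f0: "f (replicate m False) = replicate n False"
    and rows: "\<forall>r \<in> set L. length r = m" and len: "length R = length L"
    and weights: "\<forall>j < length L. weight (R ! j) = weight (L ! j)"
    and meets: "\<forall>j < length L. dot01 (R ! j) (R ! i) = dot01 (L ! j) (L ! i)"
    and i: "i < length L"
  shows "contraction_map (weight (L ! i)) (weight (R ! i)) (null_reduce L i) (null_reduce R i)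
           (\<lambda>y. nths (f (scatter (L ! i) y)) {k. R ! i ! k})"
proof -
  have ne: "nonexpansive m n f" and fL: "\<forall>j < length L. f (L ! j) = R ! j"
    using f by (simp_all add: contraction_map_iff)
  have lenL: "length (L ! j) = m" if "j < length L" for j
    using that rows by simp
  have lenR: "length (R ! j) = n" if "j < length L" for j
    using ne lenL[OF that] fL that by (auto simp: nonexpansive_def)
  have "nonexpansive (weight (L ! i)) (weight (R ! i)) (\<lambda>y. nths (f (scatter (L ! i) y)) {k. R ! i ! k})"
    using nonexpansive_scatter_nths[of "L ! i" "R ! i" f] ne lenL[OF i] lenR[OF i] by simp
  moreover have "nths (f (scatter (L ! i) (nths (L ! j) {k. L ! i ! k}))) {k. R ! i ! k}
      = nths (R ! j) {k. R ! i ! k}" if j: "j < length L" for j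
  proof -
    have "f (map2 (\<and>) (L ! j) (L ! i)) = map2 (\<and>) (f (L ! j)) (f (L ! i))"
      using nonexpansive_map2_conj[OF ne f0 lenL[OF j] lenL[OF i]] fL weights meets i j by simp
    then show ?thesis
      using fL i j lenL lenR by (simp add: scatter_nths nths_map2_conj)
  qed
  ultimately show ?thesis
    using len by (simp add: contraction_map_iff null_reduce_def)
qed

theorem theorem1:
  fixes N mL mR :: nat and L R :: "bool list list" and i :: nat
  assumes "in_P N mL mR L R"
    and "superbalanced N L R"
    and "has_contraction_map mL mR L R"
    and "i < N + 1"
  shows "has_contraction_map (weight (L ! i)) (weight (R ! i))
           (null_reduce L i) (null_reduce R i)"
proof -
  obtain f where f: "contraction_map mL mR L R f"
    using assms(3) by (auto simp: has_contraction_map_def)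
  obtain p where p: "p < N + 1" "\<forall>k < mL. \<not> L ! p ! k" "\<forall>k < mR. \<not> R ! p ! k"
    and len: "length L = N + 1" "length R = N + 1"
    and rows: "\<forall>r \<in> set L. length r = mL" "\<forall>r \<in> set R. length r = mR"
    using assms(1) by (auto simp: in_P_def is_01_matrix_def)
  have "L ! p = replicate mL False" "R ! p = replicate mR False"
    using p len rows by (auto intro: nth_equalityI)
  then have f0: "f (replicate mL False) = replicate mR False"
    using f p len by (auto simp: contraction_map_def)
  have "\<forall>j < length L. weight (R ! j) = weight (L ! j) \<and> dot01 (R ! j) (R ! i) = dot01 (L ! j) (L ! i)"
    using assms(2,4) len by (simp add: superbalanced_def weight_eq_dot01_self)
  with contraction_map_null_reduce[OF f f0 rows(1)] len assms(4) show ?thesis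
    by (auto simp: has_contraction_map_def)
qed

end
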